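(* Let $0<d<\lambda<\frac12$ and let $N$ be an integer with $N>\lambda/(\lambda-d)$. Then asymptotically almost surely, for a random $m$-generator group at density $d$, there is no word of length $\lambda l$ which appears in $N$ different ways in the relators (i.e. as a subword at $N$ distinct locations among the cyclic words $r^{\pm1}$, $r$ a relator).
   Context: Random group at density $d$: $G=\langle s_1,\dots,s_m\mid r_1,\dots,r_n\rangle$, $m\ge2$, $n=\lfloor(2m-1)^{ld}\rfloor$, relators chosen independently and uniformly among cyclically reduced words of length exactly $l$; "asymptotically almost surely" means with probability tending to $1$ as $l\to\infty$. *)

theory Defs
  imports Complex_Main
begin

text \<open>Letters of the free group on generators s_0,...,s_(m-1): a pair (i, b) stands for
  s_i if b is True and for s_i^(-1) if b is False.\<close>
type_synonym letter = "nat \<times> bool"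

definition letter_inv :: "letter \<Rightarrow> letter" where
  "letter_inv a = (fst a, \<not> snd a)"

definition word_inv :: "letter list \<Rightarrow> letter list" where
  "word_inv w = rev (map letter_inv w)"

definition reduced :: "letter list \<Rightarrow> bool" where
  "reduced w \<longleftrightarrow> (\<forall>k. Suc k < length w \<longrightarrow> w ! Suc k \<noteq> letter_inv (w ! k))"

definition cyclically_reduced :: "letter list \<Rightarrow> bool" where
  "cyclically_reduced w \<longleftrightarrow> reduced w \<and> (w \<noteq> [] \<longrightarrow> last w \<noteq> letter_inv (hd w))"

definition CR_words :: "nat \<Rightarrow> nat \<Rightarrow> letter list set" where
  "CR_words m l = {w. length w = l \<and> (\<forall>a\<in>set w. fst a < m) \<and> cyclically_reduced w}"

text \<open>Sample space: n-tuples of relators, each a cyclically reduced word of length l.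
  Independent uniform choice = uniform distribution on this finite set.\<close>
definition relator_tuples :: "nat \<Rightarrow> nat \<Rightarrow> nat \<Rightarrow> letter list list set" where
  "relator_tuples m l n = {rs. length rs = n \<and> (\<forall>r\<in>set rs. r \<in> CR_words m l)}"

definition signed_word :: "letter list \<Rightarrow> bool \<Rightarrow> letter list" where
  "signed_word r e = (if e then r else word_inv r)"

definition cyc_subword :: "letter list \<Rightarrow> nat \<Rightarrow> nat \<Rightarrow> letter list" where
  "cyc_subword u j L = map (\<lambda>k. u ! ((j + k) mod length u)) [0..<L]"

definition locations :: "letter list list \<Rightarrow> letter list \<Rightarrow> (nat \<times> bool \<times> nat) set" where
  "locations rs w = {(i, e, j). i < length rs \<and> j < length (rs ! i) \<and>
      cyc_subword (signed_word (rs ! i) e) j (length w) = w}"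

definition repeated_word :: "nat \<Rightarrow> nat \<Rightarrow> letter list list \<Rightarrow> bool" where
  "repeated_word L N rs \<longleftrightarrow> (\<exists>w. length w = L \<and> card (locations rs w) \<ge> N)"

definition num_relators :: "nat \<Rightarrow> real \<Rightarrow> nat \<Rightarrow> nat" where
  "num_relators m d l = nat \<lfloor>(2 * real m - 1) powr (real l * d)\<rfloor>"

definition prob_event :: "nat \<Rightarrow> nat \<Rightarrow> nat \<Rightarrow> (letter list list \<Rightarrow> bool) \<Rightarrow> real" where
  "prob_event m l n P = real (card {rs \<in> relator_tuples m l n. P rs}) / real (card (relator_tuples m l n))"

end

theory Submission
  imports Defs "HOL-Library.FuncSet" "HOL-Real_Asymp.Real_Asymp"
begin

text \<open>
  The proof is a union bound.  If a word of length \<open>L = \<lfloor>\<lambda>l\<rfloor>\<close> occurs at \<open>N\<close> locations, then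
  either two of the locations lie in the same relator, or \<open>N\<close> locations in \<open>N\<close> distinct
  relators carry the same subword.

  Both alternatives are counted with one estimate: among the reduced words of length \<open>l\<close>,
  those in which a set \<open>D\<close> of positions is forced by earlier positions number at most
  \<open>2m(2m-1)^(l-1-|D|)\<close>.  After a rotation, prescribing a subword of length \<open>L\<close> forces \<open>L - 1\<close>
  letters of a relator, and two distinct coinciding windows of \<open>r\<^sup>\<plusminus>\<^sup>1\<close> force \<open>L\<close> letters: the
  window is forced by a translate of itself if both occurrences have the same sign, and by its
  mirror image otherwise.  The mirror image cannot meet the window, for then it would fix a
  letter or swap two adjacent letters, which a reduced word forbids.  Since there are at least
  \<open>(2m-1)^(l-2)\<close> cyclically reduced words, a relator overlaps itself with probability
  \<open>O(l\<^sup>2 (2m-1)^(-L))\<close> and carries a given subword at a given location with probability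
  \<open>O((2m-1)^(1-L))\<close>.  With at most \<open>(2m-1)^(dl)\<close> relators the two alternatives have
  probabilities \<open>O(l\<^sup>2 (2m-1)^(-(\<lambda>-d)l))\<close> and \<open>O(l^N (2m-1)^(-(N(\<lambda>-d)-\<lambda>)l))\<close>, which tend to
  \<open>0\<close> because \<open>d < \<lambda>\<close> and \<open>N(\<lambda>-d) > \<lambda>\<close>.
\<close>

lemma mod_add_right_cancel_less:
  fixes a b c l :: nat
  assumes "(a + c) mod l = (b + c) mod l" and "a < l" and "b < l"
  shows "a = b"
proof -
  have less_imp_eq: "x = y" if xy: "(x + c) mod l = (y + c) mod l" "x \<le> y" "y < l" for x y
  proof -
    obtain s where "y + c = x + c + l * s" using mod_eq_nat2E[OF xy(1)] xy(2) by auto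
    with xy(3) show ?thesis by (cases s) auto
  qed
  show ?thesis
    using less_imp_eq[of a b] less_imp_eq[of b a] assms by (cases "a \<le> b") auto
qed

lemma inj_rotate: "inj (rotate n)"
  by (simp add: rotate_def inj_fn inj_rotate1)

lemma card_snoc_image:
  assumes "finite T" and "\<And>u. u \<in> T \<Longrightarrow> finite (A u)"
  shows "card ((\<lambda>(u, a). u @ [a]) ` Sigma T A) = (\<Sum>u\<in>T. card (A u))"
proof -
  have "inj_on (\<lambda>(u, a). u @ [a]) (Sigma T A)" by (auto simp: inj_on_def)
  then show ?thesis using assms by (simp add: card_image)
qed

lemma card_lists_nth_in:
  "card {rs. length rs = n \<and> (\<forall>p<n. rs ! p \<in> C p)} = (\<Prod>p<n. card (C p))"
proof -
  have "bij_betw (\<lambda>rs. restrict ((!) rs) {..<n}) {rs. length rs = n \<and> (\<forall>p<n. rs ! p \<in> C p)} (Pi\<^sub>E {..<n} C)"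
    by (rule bij_betw_byWitness[where f' = "\<lambda>f. map f [0..<n]"])
      (auto simp: PiE_def extensional_def restrict_def intro!: nth_equalityI)
  then show ?thesis by (simp add: bij_betw_same_card card_PiE)
qed

lemma finite_lists_nth_in:
  assumes "finite C" and "\<And>p. p < n \<Longrightarrow> D p \<subseteq> C"
  shows "finite {rs. length rs = n \<and> (\<forall>p<n. rs ! p \<in> D p)}"
  by (rule finite_subset[OF _ finite_lists_length_eq[OF assms(1), of n]])
    (use assms(2) in \<open>fastforce simp: in_set_conv_nth\<close>)

lemma prod_lessThan_le_inj:
  fixes f b :: "nat \<Rightarrow> nat"
  assumes inj: "inj_on \<iota> {..<N}" and sub: "\<iota> ` {..<N} \<subseteq> {..<n}"
    and rest: "\<And>p. p < n \<Longrightarrow> p \<notin> \<iota> ` {..<N} \<Longrightarrow> f p = c"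
    and bound: "\<And>k. k < N \<Longrightarrow> f (\<iota> k) \<le> b k"
  shows "(\<Prod>p<n. f p) \<le> (\<Prod>k<N. b k) * c ^ (n - N)"
proof -
  have "(\<Prod>p<n. f p) = (\<Prod>p\<in>{..<n} - \<iota> ` {..<N}. f p) * (\<Prod>p\<in>\<iota> ` {..<N}. f p)"
    by (rule prod.subset_diff[OF sub]) simp
  also have "(\<Prod>p\<in>{..<n} - \<iota> ` {..<N}. f p) = c ^ (n - N)"
    using rest card_Diff_subset[OF _ sub] card_image[OF inj] by simp
  also have "(\<Prod>p\<in>\<iota> ` {..<N}. f p) = (\<Prod>k<N. f (\<iota> k))"
    using prod.reindex[OF inj] by simp
  also have "\<dots> \<le> (\<Prod>k<N. b k)"
    by (rule prod_mono) (use bound in auto)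
  finally show ?thesis by (simp add: mult.commute)
qed

lemma card_lists_exists_nth_le:
  assumes "finite C"
  shows "card {rs. length rs = n \<and> (\<forall>p<n. rs ! p \<in> C) \<and> (\<exists>i<n. Q (rs ! i))}
    \<le> n * card {r \<in> C. Q r} * card C ^ (n - 1)"
proof -
  let ?A = "\<lambda>i. {rs. length rs = n \<and> (\<forall>p<n. rs ! p \<in> (if p = i then {r \<in> C. Q r} else C))}"
  have "{rs. length rs = n \<and> (\<forall>p<n. rs ! p \<in> C) \<and> (\<exists>i<n. Q (rs ! i))} \<subseteq> (\<Union>i<n. ?A i)"
    by auto
  moreover have "finite (\<Union>i<n. ?A i)"
    using assms by (intro finite_UN_I finite_lessThan finite_lists_nth_in[of C]) auto
  ultimately have "card {rs. length rs = n \<and> (\<forall>p<n. rs ! p \<in> C) \<and> (\<exists>i<n. Q (rs ! i))} \<le> card (\<Union>i<n. ?A i)"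
    by (rule card_mono[rotated])
  also have "\<dots> \<le> (\<Sum>i<n. card (?A i))"
    by (rule card_UN_le) simp
  also have "\<dots> \<le> (\<Sum>i<n. card {r \<in> C. Q r} * card C ^ (n - 1))"
  proof (rule sum_mono)
    fix i assume "i \<in> {..<n}"
    then have "(\<Prod>p<n. card (if p = i then {r \<in> C. Q r} else C))
        = card {r \<in> C. Q r} * (\<Prod>p\<in>{..<n} - {i}. card C)"
      by (subst prod.remove[of _ i]) (auto intro!: prod.cong)
    then show "card (?A i) \<le> card {r \<in> C. Q r} * card C ^ (n - 1)"
      using \<open>i \<in> {..<n}\<close> by (simp add: card_lists_nth_in)
  qed
  finally show ?thesis by simp
qed

lemma card_lists_fixed_feature_le:
  assumes "finite C" and inj: "inj_on \<iota> {..<N}" and sub: "\<iota> ` {..<N} \<subseteq> {..<n}" and "N \<ge> 1"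
  shows "card {rs. length rs = n \<and> (\<forall>p<n. rs ! p \<in> C) \<and> rs ! \<iota> 0 = r0 \<and> (\<forall>k<N. F k (rs ! \<iota> k) = F 0 r0)}
    \<le> (\<Prod>k\<in>{1..<N}. card {r \<in> C. F k r = F 0 r0}) * card C ^ (n - N)"
proof -
  let ?D = "\<lambda>p. {r \<in> C. (p = \<iota> 0 \<longrightarrow> r = r0) \<and> (\<forall>k<N. \<iota> k = p \<longrightarrow> F k r = F 0 r0)}"
  let ?b = "\<lambda>k. if k = 0 then 1 else card {r \<in> C. F k r = F 0 r0}"
  have "{rs. length rs = n \<and> (\<forall>p<n. rs ! p \<in> C) \<and> rs ! \<iota> 0 = r0 \<and> (\<forall>k<N. F k (rs ! \<iota> k) = F 0 r0)}
      \<subseteq> {rs. length rs = n \<and> (\<forall>p<n. rs ! p \<in> ?D p)}"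
    by auto
  then have "card {rs. length rs = n \<and> (\<forall>p<n. rs ! p \<in> C) \<and> rs ! \<iota> 0 = r0 \<and> (\<forall>k<N. F k (rs ! \<iota> k) = F 0 r0)}
      \<le> (\<Prod>p<n. card (?D p))"
    unfolding card_lists_nth_in[symmetric] by (rule card_mono[OF finite_lists_nth_in[OF assms(1)], rotated]) auto
  also have "\<dots> \<le> (\<Prod>k<N. ?b k) * card C ^ (n - N)"
  proof (rule prod_lessThan_le_inj[OF inj sub])
    show "card (?D (\<iota> k)) \<le> ?b k" if "k < N" for k
    proof (cases "k = 0")
      case True
      then have "?D (\<iota> k) \<subseteq> {r0}" by auto
      then have "card (?D (\<iota> k)) \<le> 1" using card_mono[of "{r0}"] by simp
      with True show ?thesis by simp
    next
      case False
      have "?D (\<iota> k) \<subseteq> {r \<in> C. F k r = F 0 r0}" using that by auto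
      with \<open>finite C\<close> have "card (?D (\<iota> k)) \<le> card {r \<in> C. F k r = F 0 r0}"
        by (intro card_mono) auto
      with False show ?thesis by simp
    qed
    show "card (?D p) = card C" if "p \<notin> \<iota> ` {..<N}" for p
    proof -
      have "p \<noteq> \<iota> 0" "\<forall>k<N. \<iota> k \<noteq> p" using that \<open>N \<ge> 1\<close> by auto
      then have "?D p = C" by blast
      then show ?thesis by simp
    qed
  qed
  also have "(\<Prod>k<N. ?b k) = (\<Prod>k\<in>{1..<N}. card {r \<in> C. F k r = F 0 r0})"
  proof -
    have "{..<N} = insert 0 {1..<N}" using \<open>N \<ge> 1\<close> by auto
    then have "(\<Prod>k<N. ?b k) = (\<Prod>k\<in>{1..<N}. ?b k)" by simp
    also have "\<dots> = (\<Prod>k\<in>{1..<N}. card {r \<in> C. F k r = F 0 r0})" by (rule prod.cong) auto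
    finally show ?thesis .
  qed
  finally show ?thesis .
qed

lemma card_lists_common_feature_le:
  assumes "finite C" and "inj_on \<iota> {..<N}" and sub: "\<iota> ` {..<N} \<subseteq> {..<n}" and "N \<ge> 1"
  shows "card {rs. length rs = n \<and> (\<forall>p<n. rs ! p \<in> C) \<and> (\<forall>k<N. F k (rs ! \<iota> k) = F 0 (rs ! \<iota> 0))}
    \<le> (\<Sum>r0\<in>C. \<Prod>k\<in>{1..<N}. card {r \<in> C. F k r = F 0 r0}) * card C ^ (n - N)"
proof -
  let ?A = "\<lambda>r0. {rs. length rs = n \<and> (\<forall>p<n. rs ! p \<in> C) \<and> rs ! \<iota> 0 = r0 \<and> (\<forall>k<N. F k (rs ! \<iota> k) = F 0 r0)}"
  have "\<iota> 0 < n" using sub \<open>N \<ge> 1\<close> by (auto simp: image_subset_iff)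
  have "{rs. length rs = n \<and> (\<forall>p<n. rs ! p \<in> C) \<and> (\<forall>k<N. F k (rs ! \<iota> k) = F 0 (rs ! \<iota> 0))}
      \<subseteq> (\<Union>r0\<in>C. ?A r0)"
  proof
    fix rs assume rs: "rs \<in> {rs. length rs = n \<and> (\<forall>p<n. rs ! p \<in> C) \<and> (\<forall>k<N. F k (rs ! \<iota> k) = F 0 (rs ! \<iota> 0))}"
    then have "rs ! \<iota> 0 \<in> C" and "rs \<in> ?A (rs ! \<iota> 0)"
      using \<open>\<iota> 0 < n\<close> by (simp_all only: mem_Collect_eq) blast+
    then show "rs \<in> (\<Union>r0\<in>C. ?A r0)" by blast
  qed
  moreover have "finite (\<Union>r0\<in>C. ?A r0)"
    by (rule finite_subset[OF _ finite_lists_nth_in[OF assms(1), of n "\<lambda>_. C"]]) blast+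
  ultimately have "card {rs. length rs = n \<and> (\<forall>p<n. rs ! p \<in> C) \<and> (\<forall>k<N. F k (rs ! \<iota> k) = F 0 (rs ! \<iota> 0))}
      \<le> card (\<Union>r0\<in>C. ?A r0)"
    by (rule card_mono[rotated])
  also have "\<dots> \<le> (\<Sum>r0\<in>C. card (?A r0))"
    by (rule card_UN_le[OF \<open>finite C\<close>])
  also have "\<dots> \<le> (\<Sum>r0\<in>C. (\<Prod>k\<in>{1..<N}. card {r \<in> C. F k r = F 0 r0}) * card C ^ (n - N))"
    by (rule sum_mono) (rule card_lists_fixed_feature_le[OF assms])
  finally show ?thesis by (simp add: sum_distrib_right)
qed

lemma of_nat_div_le_of_nat_div:
  fixes a b c d :: nat
  assumes "a * d \<le> c * b" and "0 < b" and "0 < d"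
  shows "real a / real b \<le> real c / real d"
proof -
  have "real a * real d \<le> real c * real b"
    using assms(1) by (simp only: of_nat_mult[symmetric] of_nat_le_iff)
  with assms(2,3) show ?thesis by (simp add: field_simps)
qed

lemma power_times_powr_decay:
  fixes a q :: real
  assumes "a > 0" and "q > 1"
  shows "(\<lambda>l. real l ^ k * q powr (- a * real l)) \<longlonglongrightarrow> 0"
  using assms by real_asymp

section \<open>Letters and reduced words\<close>

lemma letter_inv_letter_inv [simp]: "letter_inv (letter_inv a) = a"
  by (simp add: letter_inv_def)

lemma letter_inv_neq [simp]: "letter_inv a \<noteq> a" "a \<noteq> letter_inv a"
  by (cases a; simp add: letter_inv_def)+

lemma fst_letter_inv [simp]: "fst (letter_inv a) = fst a"
  by (simp add: letter_inv_def)

lemma letter_inv_eq_iff: "letter_inv a = b \<longleftrightarrow> a = letter_inv b"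
  by auto

lemma length_word_inv [simp]: "length (word_inv w) = length w"
  by (simp add: word_inv_def)

lemma word_inv_word_inv [simp]: "word_inv (word_inv w) = w"
  by (simp add: word_inv_def rev_map o_def)

lemma set_word_inv: "set (word_inv w) = letter_inv ` set w"
  by (simp add: word_inv_def)

lemma nth_word_inv: "k < length w \<Longrightarrow> word_inv w ! k = letter_inv (w ! (length w - 1 - k))"
  by (simp add: word_inv_def rev_nth)

text \<open>Cyclic reducedness with indices read modulo the length; in this form invariance under
  rotation and inversion is a matter of index arithmetic.\<close>

definition cyc_reduced :: "letter list \<Rightarrow> bool" where
  "cyc_reduced w \<longleftrightarrow> (\<forall>k<length w. w ! (Suc k mod length w) \<noteq> letter_inv (w ! k))"

lemma cyclically_reduced_iff_cyc_reduced: "cyclically_reduced w \<longleftrightarrow> cyc_reduced w"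
proof (cases w rule: rev_cases)
  case (snoc v a)
  define n where "n = length v"
  have len: "length w = Suc n" and hd: "hd w = w ! 0" and last: "last w = w ! n"
    using snoc by (simp_all add: n_def hd_conv_nth nth_append)
  have "cyc_reduced w \<longleftrightarrow> (\<forall>k<n. w ! Suc k \<noteq> letter_inv (w ! k)) \<and> w ! 0 \<noteq> letter_inv (w ! n)"
    unfolding cyc_reduced_def len by (auto simp: less_Suc_eq mod_Suc)
  also have "\<dots> \<longleftrightarrow> cyclically_reduced w"
    unfolding cyclically_reduced_def reduced_def len hd last using snoc
    by (auto simp: letter_inv_eq_iff)
  finally show ?thesis ..
qed (simp add: cyclically_reduced_def cyc_reduced_def reduced_def)

lemma cyc_reduced_imp_reduced: "cyc_reduced w \<Longrightarrow> reduced w"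
  using cyclically_reduced_iff_cyc_reduced cyclically_reduced_def by blast

lemma cyc_reduced_rotate:
  assumes "cyc_reduced w" shows "cyc_reduced (rotate j w)"
  unfolding cyc_reduced_def
proof (intro allI impI)
  fix k assume "k < length (rotate j w)"
  then have k: "k < length w" and w: "0 < length w" by auto
  then have "(k + j) mod length w < length w" by simp
  with assms have "w ! (Suc ((k + j) mod length w) mod length w) \<noteq> letter_inv (w ! ((k + j) mod length w))"
    unfolding cyc_reduced_def by blast
  moreover have "Suc ((k + j) mod length w) mod length w = (Suc k mod length w + j) mod length w"
    by (simp add: mod_Suc_eq mod_add_left_eq)
  ultimately show "rotate j w ! (Suc k mod length (rotate j w)) \<noteq> letter_inv (rotate j w ! k)"
    using k w by (simp add: nth_rotate add.commute)
qed

lemma cyc_reduced_word_inv: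
  assumes "cyc_reduced w" shows "cyc_reduced (word_inv w)"
  unfolding cyc_reduced_def
proof (intro allI impI)
  fix k assume k: "k < length (word_inv w)"
  define n where "n = length w - 1"
  have n: "length w = Suc n" and kn: "k \<le> n" using k by (auto simp: n_def)
  define i where "i = (if k = n then n else n - Suc k)"
  have "i < length w" unfolding i_def n by auto
  with assms have "w ! (Suc i mod length w) \<noteq> letter_inv (w ! i)"
    unfolding cyc_reduced_def by blast
  moreover have "word_inv w ! (Suc k mod length w) = letter_inv (w ! i)"
    using kn n by (auto simp: i_def nth_word_inv)
  moreover have "word_inv w ! k = letter_inv (w ! (Suc i mod length w))"
    using kn n by (auto simp: i_def nth_word_inv Suc_diff_Suc)
  ultimately show "word_inv w ! (Suc k mod length (word_inv w)) \<noteq> letter_inv (word_inv w ! k)"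
    by (metis length_word_inv letter_inv_letter_inv)
qed

lemma letters_eq: "{a :: letter. fst a < m} = {..<m} \<times> UNIV"
  by auto

lemma card_letters: "card {a :: letter. fst a < m} = 2 * m"
  by (simp add: letters_eq card_cartesian_product)

lemma finite_letters: "finite {a :: letter. fst a < m}"
  by (simp add: letters_eq)

lemma card_letters_remove: "card {a :: letter. fst a < m \<and> a \<noteq> x} = 2 * m - (if fst x < m then 1 else 0)"
proof -
  have "{a :: letter. fst a < m \<and> a \<noteq> x} = {a. fst a < m} - {x}" by auto
  then show ?thesis using card_letters[of m] finite_letters[of m] by simp
qed

lemma finite_words: "finite {w :: letter list. length w = t \<and> (\<forall>a\<in>set w. fst a < m)}"
  by (rule finite_subset[OF _ finite_lists_length_eq[OF finite_letters[of m], of t]]) auto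

lemma reduced_snoc_iff:
  assumes "w \<noteq> []" shows "reduced (w @ [a]) \<longleftrightarrow> reduced w \<and> a \<noteq> letter_inv (last w)"
proof -
  obtain n where n: "length w = Suc n" using assms by (cases w) auto
  then have "last w = w ! n" using assms by (simp add: last_conv_nth)
  moreover have "reduced (w @ [a]) \<longleftrightarrow> (\<forall>k<Suc n. (w @ [a]) ! Suc k \<noteq> letter_inv ((w @ [a]) ! k))"
    and "reduced w \<longleftrightarrow> (\<forall>k<n. w ! Suc k \<noteq> letter_inv (w ! k))"
    by (simp_all add: reduced_def n)
  ultimately show ?thesis
    using n by (simp add: All_less_Suc nth_append conj_commute)
qed

section \<open>Counting reduced words with forced letters\<close>

definition reduced_words :: "nat \<Rightarrow> nat \<Rightarrow> letter list set" where
  "reduced_words m t = {w. length w = t \<and> reduced w \<and> (\<forall>a\<in>set w. fst a < m)}"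

lemma finite_reduced_words: "finite (reduced_words m t)"
  by (rule finite_subset[OF _ finite_words[of t m]]) (auto simp: reduced_words_def)

lemma reduced_words_Suc:
  assumes "t \<ge> 1"
  shows "reduced_words m (Suc t) =
    (\<lambda>(u, a). u @ [a]) ` Sigma (reduced_words m t) (\<lambda>u. {a. fst a < m \<and> a \<noteq> letter_inv (last u)})"
    (is "_ = ?snoc ` Sigma _ ?A")
proof (intro equalityI subsetI)
  fix w assume w: "w \<in> reduced_words m (Suc t)"
  then obtain u a where wua: "w = u @ [a]"
    by (cases w rule: rev_cases) (auto simp: reduced_words_def)
  moreover have "u \<noteq> []" using w assms wua by (auto simp: reduced_words_def)
  ultimately have "(u, a) \<in> Sigma (reduced_words m t) ?A"
    using w by (auto simp: reduced_words_def reduced_snoc_iff)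
  then show "w \<in> ?snoc ` Sigma (reduced_words m t) ?A"
    unfolding wua by force
next
  fix w assume "w \<in> ?snoc ` Sigma (reduced_words m t) ?A"
  then obtain u a where "w = u @ [a]" "u \<in> reduced_words m t" "a \<in> ?A u"
    by auto
  moreover have "u \<noteq> []" using assms \<open>u \<in> _\<close> by (auto simp: reduced_words_def)
  ultimately show "w \<in> reduced_words m (Suc t)"
    by (auto simp: reduced_words_def reduced_snoc_iff)
qed

lemma card_reduced_words:
  assumes "t \<ge> 1" shows "card (reduced_words m t) = 2 * m * (2 * m - 1) ^ (t - 1)"
  using assms
proof (induction t rule: dec_induct)
  case base
  have "reduced_words m 1 = (\<lambda>a. [a]) ` {a. fst a < m}"
    by (auto simp: reduced_words_def reduced_def length_Suc_conv)
  then show ?case by (simp add: card_image inj_on_def card_letters)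
next
  case (step t)
  have "last u \<in> set u" if "u \<in> reduced_words m t" for u
    using that step.hyps by (cases u) (auto simp: reduced_words_def)
  then have "card {a. fst a < m \<and> a \<noteq> letter_inv (last u)} = 2 * m - 1" if "u \<in> reduced_words m t" for u
    using that by (auto simp: card_letters_remove reduced_words_def)
  then have "card (reduced_words m (Suc t)) = card (reduced_words m t) * (2 * m - 1)"
    using step.hyps finite_letters
    by (simp add: reduced_words_Suc card_snoc_image finite_reduced_words)
  moreover have "(2 * m - 1) ^ (Suc t - 1) = (2 * m - 1) ^ (t - 1) * (2 * m - 1)"
    using step.hyps by (cases t) auto
  ultimately show ?case using step.IH by simp
qed

definition constrained_words ::
    "nat \<Rightarrow> nat \<Rightarrow> nat set \<Rightarrow> (nat \<Rightarrow> nat) \<Rightarrow> (nat \<Rightarrow> letter \<Rightarrow> letter) \<Rightarrow> letter list set" where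
  "constrained_words m t D g f = {w \<in> reduced_words m t. \<forall>d\<in>D. d < t \<longrightarrow> w ! d = f d (w ! g d)}"

lemma finite_constrained_words: "finite (constrained_words m t D g f)"
  unfolding constrained_words_def using finite_reduced_words by simp

lemma constrained_words_Suc_subset:
  assumes "t \<ge> 1" and g: "\<forall>d\<in>D. g d < d"
  shows "constrained_words m (Suc t) D g f \<subseteq> (\<lambda>(u, a). u @ [a]) ` Sigma (constrained_words m t D g f)
    (\<lambda>u. if t \<in> D then {f t (u ! g t)} else {a. fst a < m \<and> a \<noteq> letter_inv (last u)})"
    (is "_ \<subseteq> ?snoc ` Sigma _ ?A")
proof
  fix w assume w: "w \<in> constrained_words m (Suc t) D g f"
  then obtain u a where wua: "w = u @ [a]"
    by (cases w rule: rev_cases) (auto simp: constrained_words_def reduced_words_def)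
  have u: "u \<noteq> []" "length u = t"
    using w assms wua by (auto simp: constrained_words_def reduced_words_def)
  have "u ! d = f d (u ! g d)" if "d \<in> D" "d < t" for d
    using w that g u(2) by (fastforce simp: constrained_words_def wua nth_append)
  moreover have "a \<in> ?A u"
    using w g u by (auto simp: constrained_words_def reduced_words_def wua nth_append reduced_snoc_iff)
  ultimately have "(u, a) \<in> Sigma (constrained_words m t D g f) ?A"
    using w u by (auto simp: constrained_words_def reduced_words_def wua reduced_snoc_iff)
  then show "w \<in> ?snoc ` Sigma (constrained_words m t D g f) ?A"
    unfolding wua by force
qed

lemma card_constrained_words_le:
  assumes g: "\<forall>d\<in>D. g d < d" and "t \<ge> 1"
  shows "card (constrained_words m t D g f) * (2 * m - 1) ^ card (D \<inter> {..<t}) \<le> 2 * m * (2 * m - 1) ^ (t - 1)"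
  using \<open>t \<ge> 1\<close>
proof (induction t rule: dec_induct)
  case base
  have "D \<inter> {..<1} = {}" using g by fastforce
  moreover have "card (constrained_words m 1 D g f) \<le> card (reduced_words m 1)"
    by (rule card_mono[OF finite_reduced_words]) (auto simp: constrained_words_def)
  ultimately show ?case using card_reduced_words[of 1 m] by simp
next
  case (step t)
  let ?C = "constrained_words m t D g f"
  let ?q = "2 * m - 1"
  let ?A = "\<lambda>u. if t \<in> D then {f t (u ! g t)} else {a. fst a < m \<and> a \<noteq> letter_inv (last u)}"
  let ?c = "if t \<in> D then 1 else ?q" and ?e = "if t \<in> D then ?q else 1"
  have "card (?A u) \<le> ?c" if "u \<in> ?C" for u
  proof -
    have "last u \<in> set u" using that step.hyps
      by (cases u) (auto simp: constrained_words_def reduced_words_def)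
    then show ?thesis using that by (auto simp: card_letters_remove constrained_words_def reduced_words_def)
  qed
  then have "card (constrained_words m (Suc t) D g f) \<le> (\<Sum>u\<in>?C. card (?A u))"
    using card_mono[OF _ constrained_words_Suc_subset[OF step.hyps(1) g]] finite_letters
    by (simp add: card_snoc_image finite_constrained_words)
  also have "\<dots> \<le> card ?C * ?c"
    using sum_bounded_above[of ?C "\<lambda>u. card (?A u)" ?c] \<open>\<And>u. u \<in> ?C \<Longrightarrow> card (?A u) \<le> ?c\<close>
    by (simp add: mult.commute)
  finally have card_Suc: "card (constrained_words m (Suc t) D g f) \<le> card ?C * ?c" .
  have "?q ^ card (D \<inter> {..<Suc t}) = ?q ^ card (D \<inter> {..<t}) * ?e"
    by (cases "t \<in> D") (simp_all add: lessThan_Suc insert_absorb)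
  then have "card (constrained_words m (Suc t) D g f) * ?q ^ card (D \<inter> {..<Suc t})
      \<le> card ?C * ?c * (?q ^ card (D \<inter> {..<t}) * ?e)"
    using card_Suc by simp
  also have "\<dots> = card ?C * ?q ^ card (D \<inter> {..<t}) * ?q"
    by (simp add: ac_simps)
  also have "\<dots> \<le> 2 * m * ?q ^ (t - 1) * ?q"
    using step.IH by simp
  also have "\<dots> = 2 * m * ?q ^ (Suc t - 1)"
    using step.hyps by (cases t) auto
  finally show ?case .
qed

lemma finite_CR_words: "finite (CR_words m l)"
  by (rule finite_subset[OF _ finite_words[of l m]]) (auto simp: CR_words_def)

lemma card_reduced_words_le_CR_words:
  assumes "m \<ge> 2" and "l \<ge> 2"
  shows "card (reduced_words m (l - 1)) \<le> card (CR_words m l)"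
proof -
  have avoid: "\<exists>a. fst a < m \<and> a \<noteq> x \<and> a \<noteq> y" for x y :: letter
  proof -
    obtain a :: letter where "a \<in> {(0, True), (0, False), (1, True)}" "a \<noteq> x" "a \<noteq> y"
      by (cases "x = (0, True)"; cases "y = (0, True)"; cases "x = (0, False)"; cases "y = (0, False)"; auto)
    then show ?thesis using assms(1) by (intro exI[of _ a]) auto
  qed
  define pick where "pick w = (SOME a. fst a < m \<and> a \<noteq> letter_inv (last w) \<and> a \<noteq> letter_inv (hd w))" for w
  have pick: "fst (pick w) < m \<and> pick w \<noteq> letter_inv (last w) \<and> pick w \<noteq> letter_inv (hd w)" for w
    unfolding pick_def by (rule someI_ex) (rule avoid)
  have img: "(\<lambda>w. w @ [pick w]) ` reduced_words m (l - 1) \<subseteq> CR_words m l"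
  proof clarify
    fix w assume w: "w \<in> reduced_words m (l - 1)"
    then have "w \<noteq> []" using assms(2) by (auto simp: reduced_words_def)
    then show "w @ [pick w] \<in> CR_words m l"
      using w pick[of w] assms(2)
      by (auto simp: CR_words_def reduced_words_def cyclically_reduced_def reduced_snoc_iff)
  qed
  show ?thesis
    by (rule card_inj_on_le[OF _ img finite_CR_words]) (simp add: inj_on_def)
qed

lemma reduced_words_le_CR_words:
  assumes "m \<ge> 2" and "l \<ge> 2"
  shows "2 * m * (2 * m - 1) ^ (l - 1) \<le> (2 * m - 1) * card (CR_words m l)"
proof -
  have "2 * m * (2 * m - 1) ^ (l - 1) = (2 * m - 1) * card (reduced_words m (l - 1))"
    using assms(2) card_reduced_words[of "l - 1" m] by (cases l) (auto simp: power_eq_if)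
  then show ?thesis using card_reduced_words_le_CR_words[OF assms] by simp
qed

lemma card_CR_words_pos:
  assumes "m \<ge> 2" and "l \<ge> 2"
  shows "0 < card (CR_words m l)"
proof -
  have "0 < 2 * m * (2 * m - 1) ^ (l - 1)" using assms(1) by simp
  also have "\<dots> \<le> (2 * m - 1) * card (CR_words m l)"
    by (rule reduced_words_le_CR_words[OF assms])
  finally show ?thesis by simp
qed

lemma CR_wordsD:
  assumes "r \<in> CR_words m l"
  shows "length r = l" and "cyc_reduced r" and "\<forall>a\<in>set r. fst a < m"
  using assms by (auto simp: CR_words_def cyclically_reduced_iff_cyc_reduced)

lemma word_inv_CR_words: "r \<in> CR_words m l \<Longrightarrow> word_inv r \<in> CR_words m l"
  by (auto simp: CR_words_def cyclically_reduced_iff_cyc_reduced cyc_reduced_word_inv set_word_inv)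

lemma rotate_CR_words: "r \<in> CR_words m l \<Longrightarrow> rotate j r \<in> reduced_words m l"
  by (auto simp: reduced_words_def dest: CR_wordsD intro: cyc_reduced_imp_reduced cyc_reduced_rotate)

lemma card_CR_words_signed_word:
  "card {r \<in> CR_words m l. P (signed_word r e)} = card {r \<in> CR_words m l. P r}"
proof (rule bij_betw_same_card)
  show "bij_betw (\<lambda>r. signed_word r e) {r \<in> CR_words m l. P (signed_word r e)} {r \<in> CR_words m l. P r}"
    by (rule bij_betw_byWitness[where f' = "\<lambda>r. signed_word r e"])
      (auto simp: signed_word_def word_inv_CR_words)
qed

lemma card_le_constrained_words:
  assumes "inj_on \<phi> S" and "\<phi> ` S \<subseteq> constrained_words m l D g f"
    and "\<forall>d\<in>D. g d < d" and "D \<subseteq> {..<l}" and "l \<ge> 1"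
  shows "card S * (2 * m - 1) ^ card D \<le> 2 * m * (2 * m - 1) ^ (l - 1)"
proof -
  have "card S \<le> card (constrained_words m l D g f)"
    using card_inj_on_le[OF assms(1,2) finite_constrained_words] .
  then have "card S * (2 * m - 1) ^ card D \<le> card (constrained_words m l D g f) * (2 * m - 1) ^ card D"
    by simp
  also have "\<dots> \<le> 2 * m * (2 * m - 1) ^ (l - 1)"
    using card_constrained_words_le[OF assms(3,5), of m f] Int_absorb2[OF assms(4)] by simp
  finally show ?thesis .
qed

section \<open>Repeated subwords of a single relator\<close>

lemma nth_cyc_subword: "k < L \<Longrightarrow> cyc_subword u j L ! k = u ! ((j + k) mod length u)"
  by (simp add: cyc_subword_def)

lemma cyc_subword_add_length: "cyc_subword u (j + length u) L = cyc_subword u j L"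
proof -
  have "(j + length u + k) mod length u = (j + k) mod length u" for k
    by (metis add.commute add.left_commute mod_add_self2)
  then show ?thesis by (simp add: cyc_subword_def)
qed

lemma card_cyc_subword_eq_le:
  assumes "1 \<le> L" and "L \<le> l"
  shows "card {r \<in> CR_words m l. cyc_subword r j L = u} * (2 * m - 1) ^ (L - 1) \<le> 2 * m * (2 * m - 1) ^ (l - 1)"
proof -
  let ?S = "{r \<in> CR_words m l. cyc_subword r j L = u}"
  \<comment> \<open>the first letter stays free: a forced position needs an earlier one\<close>
  have "card ?S * (2 * m - 1) ^ card {1..<L} \<le> 2 * m * (2 * m - 1) ^ (l - 1)"
  proof (rule card_le_constrained_words)
    show "inj_on (rotate j) ?S" using inj_rotate by (rule inj_on_subset) simp
    show "rotate j ` ?S \<subseteq> constrained_words m l {1..<L} (\<lambda>_. 0) (\<lambda>d _. u ! d)"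
    proof (rule image_subsetI)
      fix r assume "r \<in> ?S"
      then have r: "r \<in> CR_words m l" and u: "cyc_subword r j L = u" by auto
      have "rotate j r ! d = u ! d" if "d < L" for d
        using that assms CR_wordsD(1)[OF r] nth_cyc_subword[of d L r j]
        by (simp add: u nth_rotate add.commute)
      then show "rotate j r \<in> constrained_words m l {1..<L} (\<lambda>_. 0) (\<lambda>d _. u ! d)"
        using rotate_CR_words[OF r] by (simp add: constrained_words_def)
    qed
  qed (use assms in auto)
  then show ?thesis by simp
qed

definition subword_at :: "nat \<Rightarrow> bool \<times> nat \<Rightarrow> letter list \<Rightarrow> letter list" where
  "subword_at L x r = cyc_subword (signed_word r (fst x)) (snd x) L"

lemma card_subword_at_eq_le:
  assumes "1 \<le> L" and "L \<le> l"
  shows "card {r \<in> CR_words m l. subword_at L x r = u} * (2 * m - 1) ^ (L - 1) \<le> 2 * m * (2 * m - 1) ^ (l - 1)"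
  using card_cyc_subword_eq_le[OF assms, of m "snd x" u]
    card_CR_words_signed_word[of m l "\<lambda>s. cyc_subword s (snd x) L = u" "fst x"]
  by (simp add: subword_at_def)

lemma card_cyc_subword_shift_le:
  assumes "0 < p" and "p + L \<le> l" and "1 \<le> L"
  shows "card {r \<in> CR_words m l. cyc_subword r j L = cyc_subword r (j + p) L} * (2 * m - 1) ^ L
    \<le> 2 * m * (2 * m - 1) ^ (l - 1)"
proof -
  let ?S = "{r \<in> CR_words m l. cyc_subword r j L = cyc_subword r (j + p) L}"
  have "card ?S * (2 * m - 1) ^ card {p..<p + L} \<le> 2 * m * (2 * m - 1) ^ (l - 1)"
  proof (rule card_le_constrained_words)
    show "inj_on (rotate j) ?S" using inj_rotate by (rule inj_on_subset) simp
    show "rotate j ` ?S \<subseteq> constrained_words m l {p..<p + L} (\<lambda>d. d - p) (\<lambda>_ a. a)"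
    proof (rule image_subsetI)
      fix r assume "r \<in> ?S"
      then have r: "r \<in> CR_words m l" and eq: "cyc_subword r j L = cyc_subword r (j + p) L" by auto
      have "rotate j r ! d = rotate j r ! (d - p)" if "p \<le> d" "d < p + L" for d
      proof -
        have "rotate j r ! d = cyc_subword r (j + p) L ! (d - p)"
          using that assms CR_wordsD(1)[OF r] by (simp add: nth_rotate nth_cyc_subword add.commute)
        also have "\<dots> = rotate j r ! (d - p)"
          using that assms CR_wordsD(1)[OF r] by (simp add: eq[symmetric] nth_rotate nth_cyc_subword add.commute)
        finally show ?thesis .
      qed
      then show "rotate j r \<in> constrained_words m l {p..<p + L} (\<lambda>d. d - p) (\<lambda>_ a. a)"
        using rotate_CR_words[OF r] by (simp add: constrained_words_def)
    qed
  qed (use assms in auto)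
  then show ?thesis by simp
qed

lemma card_cyc_subword_repeat_le:
  assumes "j < j'" and "j' < l" and "2 * L \<le> l" and "1 \<le> L"
  shows "card {r \<in> CR_words m l. cyc_subword r j L = cyc_subword r j' L} * (2 * m - 1) ^ L
    \<le> 2 * m * (2 * m - 1) ^ (l - 1)"
proof (cases "j' - j + L \<le> l")
  case True
  then show ?thesis using card_cyc_subword_shift_le[of "j' - j" L l m j] assms by simp
next
  case False
  \<comment> \<open>measured the other way round the cycle, the shift from \<open>j'\<close> to \<open>j\<close> is short enough\<close>
  have "cyc_subword r (j' + (l - (j' - j))) L = cyc_subword r j L" if "r \<in> CR_words m l" for r
    using cyc_subword_add_length[of r j L] CR_wordsD(1)[OF that] assms
    by (simp add: add.commute)
  then have "{r \<in> CR_words m l. cyc_subword r j L = cyc_subword r j' L} =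
      {r \<in> CR_words m l. cyc_subword r j' L = cyc_subword r (j' + (l - (j' - j))) L}"
    by auto
  then show ?thesis using card_cyc_subword_shift_le[of "l - (j' - j)" L l m j'] assms False by simp
qed

lemma reduced_reflection_window_disjoint:
  assumes "reduced x" and "length x = l" and "2 * L \<le> l"
    and refl: "\<And>k. k < L \<Longrightarrow> x ! k = letter_inv (x ! P k)"
    and P: "\<And>k. P k < l" "\<And>k. (P k + k + c) mod l = 0"
    and "k1 < L" and "k2 < L"
  shows "P k1 \<noteq> k2"
proof
  assume "P k1 = k2"
  \<comment> \<open>the reflection then fixes the middle of the window: a letter or two adjacent letters\<close>
  define k where "k = (k1 + k2) div 2"
  define k' where "k' = k1 + k2 - k"
  have k: "k < L" "k' < L" "k' = k \<or> k' = Suc k"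
    using assms(7,8) unfolding k_def k'_def by auto
  have eq: "(P k + (k + c)) mod l = (k' + (k + c)) mod l"
    using P(2)[of k] P(2)[of k1] \<open>P k1 = k2\<close> unfolding k'_def k_def by (simp add: ac_simps)
  have "k' < l" using k(2) assms(3) by simp
  with eq P(1) have Pk: "P k = k'"
    by (rule mod_add_right_cancel_less)
  show False
  proof (cases "k' = k")
    case True
    then show False using refl[OF k(1)] Pk by simp
  next
    case False
    then have "k' = Suc k" using k(3) by simp
    then have "x ! Suc k = letter_inv (x ! k)" using refl[OF k(1)] Pk by simp
    moreover have "Suc k < length x" using k(2) \<open>k' = Suc k\<close> assms(2,3) by simp
    ultimately show False using assms(1) unfolding reduced_def by blast
  qed
qed

text \<open>Since \<open>P\<close> maps the window \<open>{..<L}\<close> outside itself, each position \<open>P k\<close> is forced by the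
  earlier position \<open>k\<close>.\<close>

lemma card_reflection_le:
  assumes "inj_on \<phi> S" and "\<phi> ` S \<subseteq> reduced_words m l" and "1 \<le> L" and "2 * L \<le> l"
    and refl: "\<And>r k. r \<in> S \<Longrightarrow> k < L \<Longrightarrow> \<phi> r ! k = letter_inv (\<phi> r ! P k)"
    and P: "\<And>k. P k < l" "\<And>k. (P k + k + c) mod l = 0"
  shows "card S * (2 * m - 1) ^ L \<le> 2 * m * (2 * m - 1) ^ (l - 1)"
proof (cases "S = {}")
  case False
  then obtain r0 where "r0 \<in> S" by blast
  then have disj: "P k1 \<noteq> k2" if "k1 < L" "k2 < L" for k1 k2
    using reduced_reflection_window_disjoint[of "\<phi> r0" l L P c k1 k2] assms that
    by (auto simp: reduced_words_def)
  have PP: "P (P k) = k" if "k < l" for k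
    using mod_add_right_cancel_less[of "P (P k)" "P k + c" l k] P(1) P(2)[of "P k"] P(2)[of k] that
    by (simp add: ac_simps)
  have inj: "inj_on P {..<L}"
    by (rule inj_on_inverseI[of _ P]) (use PP assms(4) in auto)
  have "card S * (2 * m - 1) ^ card (P ` {..<L}) \<le> 2 * m * (2 * m - 1) ^ (l - 1)"
  proof (rule card_le_constrained_words[OF assms(1)])
    show "\<phi> ` S \<subseteq> constrained_words m l (P ` {..<L}) P (\<lambda>_. letter_inv)"
    proof (rule image_subsetI)
      fix r assume "r \<in> S"
      have "\<phi> r ! P k = letter_inv (\<phi> r ! P (P k))" if "k < L" for k
        using refl[OF \<open>r \<in> S\<close> that] PP[of k] that assms(4) by simp
      then show "\<phi> r \<in> constrained_words m l (P ` {..<L}) P (\<lambda>_. letter_inv)"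
        using assms(2) \<open>r \<in> S\<close> by (auto simp: constrained_words_def)
    qed
    show "\<forall>d\<in>P ` {..<L}. P d < d"
    proof
      fix d assume "d \<in> P ` {..<L}"
      then obtain k where "k < L" "d = P k" by blast
      moreover have "\<not> P k < L" using disj[of k "P k"] \<open>k < L\<close> by blast
      ultimately show "P d < d" using PP[of k] assms(4) by auto
    qed
  qed (use P(1) assms in auto)
  then show ?thesis using card_image[OF inj] by simp
qed simp

text \<open>Position \<open>k\<close> of the window of \<open>r\<inverse>\<close> at \<open>j'\<close> is the inverse of the letter at position \<open>P\<close> of
  \<open>rotate j r\<close>, and \<open>P \<equiv> -(k + j + j' + 1) (mod l)\<close>.\<close>

lemma reflection_index:
  fixes l j j' k :: nat
  assumes "0 < l"
  defines "P \<equiv> (l - 1 - (j' + k) mod l + (l - j mod l)) mod l"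
  shows "(j + P) mod l = l - 1 - (j' + k) mod l" and "(P + k + (j + j' + 1)) mod l = 0"
proof -
  define Y where "Y = l - 1 - (j' + k) mod l"
  have Y: "Y < l" using assms by (simp add: Y_def)
  have jY: "j + (Y + (l - j mod l)) = Y + l * Suc (j div l)"
    using mult_div_mod_eq[of l j] mod_less_divisor[OF assms(1), of j] unfolding mult_Suc_right by linarith
  then show jP: "(j + P) mod l = l - 1 - (j' + k) mod l"
    unfolding P_def Y_def[symmetric] mod_add_right_eq jY mod_mult_self2 using Y by simp
  have "Y + k + (j' + 1) = 0 + l * Suc ((j' + k) div l)"
    using mult_div_mod_eq[of l "j' + k"] mod_less_divisor[OF assms(1), of "j' + k"]
    unfolding mult_Suc_right Y_def by linarith
  then have "(Y + k + (j' + 1)) mod l = 0" by (simp only: mod_mult_self2) simp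
  moreover have "(P + k + (j + j' + 1)) mod l = ((j + P) mod l + (k + (j' + 1))) mod l"
    unfolding mod_add_left_eq by (simp add: ac_simps)
  ultimately show "(P + k + (j + j' + 1)) mod l = 0"
    using jP by (simp add: ac_simps Y_def)
qed

lemma card_cyc_subword_reflect_le:
  assumes "1 \<le> L" and "2 * L \<le> l"
  shows "card {r \<in> CR_words m l. cyc_subword r j L = cyc_subword (word_inv r) j' L} * (2 * m - 1) ^ L
    \<le> 2 * m * (2 * m - 1) ^ (l - 1)"
proof -
  let ?S = "{r \<in> CR_words m l. cyc_subword r j L = cyc_subword (word_inv r) j' L}"
  define P where "P k = (l - 1 - (j' + k) mod l + (l - j mod l)) mod l" for k
  have l: "0 < l" using assms by simp
  show ?thesis
  proof (rule card_reflection_le[where \<phi> = "rotate j" and P = P and c = "j + j' + 1"])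
    show "inj_on (rotate j) ?S" using inj_rotate by (rule inj_on_subset) simp
    show "rotate j ` ?S \<subseteq> reduced_words m l" using rotate_CR_words by auto
    show "P k < l" for k using l by (simp add: P_def)
    show "(P k + k + (j + j' + 1)) mod l = 0" for k
      unfolding P_def using reflection_index(2)[OF l] .
    show "rotate j r ! k = letter_inv (rotate j r ! P k)" if "r \<in> ?S" "k < L" for r k
    proof -
      have r: "length r = l" and eq: "cyc_subword r j L = cyc_subword (word_inv r) j' L"
        using that(1) by (auto dest: CR_wordsD)
      have "rotate j r ! k = cyc_subword (word_inv r) j' L ! k"
        using that(2) assms r by (simp add: eq[symmetric] nth_rotate nth_cyc_subword add.commute)
      also have "\<dots> = letter_inv (r ! (l - 1 - (j' + k) mod l))"
        using that(2) r l by (simp add: nth_cyc_subword nth_word_inv)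
      also have "r ! (l - 1 - (j' + k) mod l) = rotate j r ! P k"
        using reflection_index(1)[OF l, of j j' k] r l by (simp add: nth_rotate P_def)
      finally show ?thesis .
    qed
  qed (use assms in auto)
qed

lemma card_subword_at_repeat_le:
  assumes "x \<noteq> y" and "snd x < l" and "snd y < l" and "1 \<le> L" and "2 * L \<le> l"
  shows "card {r \<in> CR_words m l. subword_at L x r = subword_at L y r} * (2 * m - 1) ^ L
    \<le> 2 * m * (2 * m - 1) ^ (l - 1)"
proof -
  obtain e j e' j' where xy: "x = (e, j)" "y = (e', j')" by fastforce
  let ?S = "\<lambda>P. {s \<in> CR_words m l. P s}"
  have "card {r \<in> CR_words m l. subword_at L x r = subword_at L y r}
      = card (?S (\<lambda>s. cyc_subword s j L = cyc_subword (signed_word s (e = e')) j' L))"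
    using card_CR_words_signed_word[of m l "\<lambda>s. cyc_subword s j L = cyc_subword (signed_word s (e = e')) j' L" e]
    by (cases e; cases e') (simp_all add: subword_at_def xy signed_word_def)
  moreover have "card (?S (\<lambda>s. cyc_subword s j L = cyc_subword (signed_word s (e = e')) j' L)) * (2 * m - 1) ^ L
      \<le> 2 * m * (2 * m - 1) ^ (l - 1)"
  proof (cases "e = e'")
    case True
    have "j \<noteq> j'" using assms(1) xy True by simp
    then consider "j < j'" | "j' < j" by linarith
    then have "card (?S (\<lambda>s. cyc_subword s j L = cyc_subword s j' L)) * (2 * m - 1) ^ L
        \<le> 2 * m * (2 * m - 1) ^ (l - 1)"
    proof cases
      case 1
      then show ?thesis using card_cyc_subword_repeat_le[of j j' l L m] assms xy by simp
    next
      case 2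
      have "?S (\<lambda>s. cyc_subword s j L = cyc_subword s j' L) = ?S (\<lambda>s. cyc_subword s j' L = cyc_subword s j L)"
        by (simp only: eq_commute)
      then show ?thesis using card_cyc_subword_repeat_le[of j' j l L m] assms xy 2 by simp
    qed
    then show ?thesis using True by (simp add: signed_word_def)
  next
    case False
    then show ?thesis using card_cyc_subword_reflect_le[of L l m j j'] assms by (simp add: signed_word_def)
  qed
  ultimately show ?thesis by simp
qed

definition position_pairs :: "nat \<Rightarrow> ((bool \<times> nat) \<times> (bool \<times> nat)) set" where
  "position_pairs l = {(x, y). snd x < l \<and> snd y < l \<and> x \<noteq> y}"

lemma finite_position_pairs: "finite (position_pairs l)"
  and card_position_pairs_le: "card (position_pairs l) \<le> 4 * l ^ 2"
proof -
  let ?X = "UNIV \<times> {..<l} :: (bool \<times> nat) set"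
  have sub: "position_pairs l \<subseteq> ?X \<times> ?X" by (auto simp: position_pairs_def)
  then show "finite (position_pairs l)" by (rule finite_subset) simp
  have "card (position_pairs l) \<le> card (?X \<times> ?X)" by (rule card_mono[OF _ sub]) simp
  also have "\<dots> = 4 * l ^ 2" by (simp add: card_cartesian_product power2_eq_square)
  finally show "card (position_pairs l) \<le> 4 * l ^ 2" .
qed

definition self_overlap :: "nat \<Rightarrow> letter list \<Rightarrow> bool" where
  "self_overlap L r \<longleftrightarrow> (\<exists>(x, y)\<in>position_pairs (length r). subword_at L x r = subword_at L y r)"

lemma card_self_overlap_le:
  assumes "1 \<le> L" and "2 * L \<le> l"
  shows "card {r \<in> CR_words m l. self_overlap L r} * (2 * m - 1) ^ L \<le> 4 * l ^ 2 * (2 * m * (2 * m - 1) ^ (l - 1))"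
proof -
  let ?K = "2 * m * (2 * m - 1) ^ (l - 1)"
  let ?S = "\<lambda>(x, y). {r \<in> CR_words m l. subword_at L x r = subword_at L y r}"
  have "{r \<in> CR_words m l. self_overlap L r} \<subseteq> (\<Union>p\<in>position_pairs l. ?S p)"
    by (force simp: self_overlap_def dest: CR_wordsD(1))
  moreover have "finite (\<Union>p\<in>position_pairs l. ?S p)"
    by (rule finite_subset[OF _ finite_CR_words]) (auto split: prod.splits)
  ultimately have "card {r \<in> CR_words m l. self_overlap L r} \<le> card (\<Union>p\<in>position_pairs l. ?S p)"
    by (rule card_mono[rotated])
  also have "\<dots> \<le> (\<Sum>p\<in>position_pairs l. card (?S p))"
    by (rule card_UN_le[OF finite_position_pairs])
  finally have "card {r \<in> CR_words m l. self_overlap L r} * (2 * m - 1) ^ L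
      \<le> (\<Sum>p\<in>position_pairs l. card (?S p) * (2 * m - 1) ^ L)"
    by (simp only: sum_distrib_right[symmetric] mult_le_mono1)
  also have "\<dots> \<le> (\<Sum>p\<in>position_pairs l. ?K)"
  proof (rule sum_mono)
    fix p assume "p \<in> position_pairs l"
    then obtain x y where "p = (x, y)" "x \<noteq> y" "snd x < l" "snd y < l"
      by (cases p) (simp add: position_pairs_def)
    then show "card (?S p) * (2 * m - 1) ^ L \<le> ?K"
      using card_subword_at_repeat_le assms by simp
  qed
  also have "\<dots> \<le> 4 * l ^ 2 * ?K"
    using card_position_pairs_le by simp
  finally show ?thesis .
qed

section \<open>Tuples of relators\<close>

lemma relator_tuples_nth: "relator_tuples m l n = {rs. length rs = n \<and> (\<forall>p<n. rs ! p \<in> CR_words m l)}"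
  by (auto simp: relator_tuples_def all_set_conv_all_nth)

lemma card_relator_tuples: "card (relator_tuples m l n) = card (CR_words m l) ^ n"
  by (simp add: relator_tuples_nth card_lists_nth_in)

lemma finite_relator_tuples: "finite (relator_tuples m l n)"
  unfolding relator_tuples_nth using finite_CR_words[of m l] by (rule finite_lists_nth_in) simp

lemma mem_locations_iff:
  "(i, x) \<in> locations rs w \<longleftrightarrow> i < length rs \<and> snd x < length (rs ! i) \<and> subword_at (length w) x (rs ! i) = w"
  by (cases x) (simp add: locations_def subword_at_def)

text \<open>\<open>pat k = (i, e, j)\<close> is the \<open>k\<close>-th of \<open>N\<close> locations, in pairwise distinct relators \<open>r\<^sub>i\<close>.\<close>

definition location_patterns :: "nat \<Rightarrow> nat \<Rightarrow> nat \<Rightarrow> (nat \<Rightarrow> nat \<times> bool \<times> nat) set" where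
  "location_patterns N n l =
    {pat \<in> {..<N} \<rightarrow>\<^sub>E {..<n} \<times> UNIV \<times> {..<l}. inj_on (fst \<circ> pat) {..<N}}"

lemma finite_location_patterns: "finite (location_patterns N n l)"
  and card_location_patterns_le: "card (location_patterns N n l) \<le> (2 * n * l) ^ N"
proof -
  have sub: "location_patterns N n l \<subseteq> {..<N} \<rightarrow>\<^sub>E {..<n} \<times> (UNIV :: bool set) \<times> {..<l}"
    by (auto simp: location_patterns_def)
  then show "finite (location_patterns N n l)"
    by (rule finite_subset) (simp add: finite_PiE)
  have "card (location_patterns N n l) \<le> card ({..<N} \<rightarrow>\<^sub>E {..<n} \<times> (UNIV :: bool set) \<times> {..<l})"
    by (rule card_mono[OF _ sub]) (simp add: finite_PiE)
  also have "\<dots> = (2 * n * l) ^ N"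
    by (simp add: card_PiE card_cartesian_product ac_simps)
  finally show "card (location_patterns N n l) \<le> (2 * n * l) ^ N" .
qed

lemma location_patterns_le: "pat \<in> location_patterns N n l \<Longrightarrow> N \<le> n"
  using card_inj_on_le[of "fst \<circ> pat" "{..<N}" "{..<n}"]
  by (force simp: location_patterns_def PiE_def Pi_def)

lemma ex_location_pattern:
  assumes "inj_on fst X" and "X \<subseteq> {..<n} \<times> UNIV \<times> {..<l}" and "card X \<ge> N"
  shows "\<exists>pat\<in>location_patterns N n l. \<forall>k<N. pat k \<in> X"
proof -
  have "finite X" using assms(2) by (rule finite_subset) auto
  then obtain Y where Y: "Y \<subseteq> X" "card Y = N"
    using obtain_subset_with_card_n[OF assms(3)] by blast
  then have "finite Y" using \<open>finite X\<close> finite_subset by blast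
  then obtain h where h: "bij_betw h {..<N} Y"
    using ex_bij_betw_nat_finite[of Y] Y(2) by (auto simp: atLeast0LessThan)
  define pat where "pat = restrict h {..<N}"
  have pat: "pat k \<in> X" if "k < N" for k
    using that h Y(1) by (auto simp: pat_def bij_betw_def)
  have "inj_on pat {..<N}" using h by (simp add: pat_def bij_betw_def inj_on_def)
  then have "inj_on (fst \<circ> pat) {..<N}"
    using assms(1) pat by (auto intro: comp_inj_on inj_on_subset)
  then have "pat \<in> location_patterns N n l"
    using pat assms(2) by (auto simp: location_patterns_def pat_def)
  with pat show ?thesis by blast
qed

lemma repeated_word_cases:
  assumes rs: "rs \<in> relator_tuples m l n" and "repeated_word L N rs" and "N \<ge> 1"
  shows "(\<exists>i<n. self_overlap L (rs ! i)) \<or>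
    (\<exists>pat\<in>location_patterns N n l. \<forall>k<N.
      subword_at L (snd (pat k)) (rs ! fst (pat k)) = subword_at L (snd (pat 0)) (rs ! fst (pat 0)))"
proof -
  obtain w where w: "length w = L" "card (locations rs w) \<ge> N"
    using assms(2) by (auto simp: repeated_word_def)
  have len: "length rs = n" "\<And>i. i < n \<Longrightarrow> length (rs ! i) = l"
    using rs by (auto simp: relator_tuples_nth dest: CR_wordsD(1))
  have loc: "i < n \<and> snd x < l \<and> subword_at L x (rs ! i) = w" if "(i, x) \<in> locations rs w" for i x
    using that len w(1) by (auto simp: mem_locations_iff)
  show ?thesis
  proof (cases "\<exists>i x y. x \<noteq> y \<and> (i, x) \<in> locations rs w \<and> (i, y) \<in> locations rs w")
    case True
    then obtain i x y where "x \<noteq> y" and x: "(i, x) \<in> locations rs w" and y: "(i, y) \<in> locations rs w"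
      by blast
    have "self_overlap L (rs ! i)"
      unfolding self_overlap_def using loc[OF x] loc[OF y] len \<open>x \<noteq> y\<close>
      by (intro bexI[of _ "(x, y)"]) (simp_all add: position_pairs_def)
    then show ?thesis using loc[OF x] by blast
  next
    case False
    have "inj_on fst (locations rs w)"
    proof (rule inj_onI)
      fix a b assume "a \<in> locations rs w" "b \<in> locations rs w" "fst a = fst b"
      with False show "a = b" by (metis prod.collapse)
    qed
    moreover have "locations rs w \<subseteq> {..<n} \<times> UNIV \<times> {..<l}"
      using loc by auto
    ultimately obtain pat where "pat \<in> location_patterns N n l" "\<forall>k<N. pat k \<in> locations rs w"
      using ex_location_pattern w(2) by blast
    moreover have "subword_at L (snd (pat k)) (rs ! fst (pat k)) = w" if "pat k \<in> locations rs w" for k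
      using loc[of "fst (pat k)" "snd (pat k)"] that by simp
    ultimately show ?thesis using \<open>N \<ge> 1\<close> by (intro disjI2 bexI[of _ pat]) auto
  qed
qed

lemma card_self_overlap_tuples_le:
  assumes "m \<ge> 2" and "1 \<le> L" and "2 * L \<le> l"
  shows "card {rs \<in> relator_tuples m l n. \<exists>i<n. self_overlap L (rs ! i)} * (2 * m - 1) ^ L
    \<le> n * (4 * l ^ 2) * (2 * m - 1) * card (CR_words m l) ^ n"
proof (cases n)
  case (Suc n')
  let ?q = "2 * m - 1" and ?c = "card (CR_words m l)"
  have self: "card {r \<in> CR_words m l. self_overlap L r} * ?q ^ L \<le> 4 * l ^ 2 * (?q * ?c)"
  proof -
    have "2 * m * ?q ^ (l - 1) \<le> ?q * ?c"
      using reduced_words_le_CR_words[OF assms(1)] assms(2,3) by simp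
    then show ?thesis
      using card_self_overlap_le[OF assms(2,3), of m] by (meson le_trans mult_le_mono2)
  qed
  have "card {rs \<in> relator_tuples m l n. \<exists>i<n. self_overlap L (rs ! i)} \<le> n * card {r \<in> CR_words m l. self_overlap L r} * ?c ^ n'"
    using card_lists_exists_nth_le[OF finite_CR_words, where n = n and Q = "self_overlap L"] Suc
    by (simp add: relator_tuples_nth conj_assoc)
  then have "card {rs \<in> relator_tuples m l n. \<exists>i<n. self_overlap L (rs ! i)} * ?q ^ L
      \<le> n * (card {r \<in> CR_words m l. self_overlap L r} * ?q ^ L) * ?c ^ n'"
    using mult_le_mono1 by (simp add: algebra_simps)
  also have "\<dots> \<le> n * (4 * l ^ 2 * (?q * ?c)) * ?c ^ n'"
    using self by simp
  also have "\<dots> = n * (4 * l ^ 2) * ?q * ?c ^ n"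
    unfolding Suc power_Suc by (simp only: ac_simps)
  finally show ?thesis .
qed simp

lemma sum_prod_card_subword_at_le:
  assumes "m \<ge> 2" and "1 \<le> L" and "2 * L \<le> l" and "N \<ge> 1"
  shows "(\<Sum>r0\<in>CR_words m l. \<Prod>k\<in>{1..<N}. card {r \<in> CR_words m l. subword_at L (x k) r = subword_at L (x 0) r0})
      * (2 * m - 1) ^ ((L - 1) * (N - 1))
    \<le> (2 * m - 1) ^ (N - 1) * card (CR_words m l) ^ N"
proof -
  let ?q = "2 * m - 1" and ?c = "card (CR_words m l)"
  let ?S = "\<lambda>k r0. {r \<in> CR_words m l. subword_at L (x k) r = subword_at L (x 0) r0}"
  have each: "card (?S k r0) * ?q ^ (L - 1) \<le> ?q * ?c" for k r0
    using card_subword_at_eq_le[OF assms(2), of l m "x k" "subword_at L (x 0) r0"]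
      reduced_words_le_CR_words[OF assms(1), of l] assms(2,3)
    by simp
  have "(\<Sum>r0\<in>CR_words m l. \<Prod>k\<in>{1..<N}. card (?S k r0)) * ?q ^ ((L - 1) * (N - 1))
      = (\<Sum>r0\<in>CR_words m l. \<Prod>k\<in>{1..<N}. card (?S k r0) * ?q ^ (L - 1))"
    by (simp add: sum_distrib_right prod.distrib power_mult)
  also have "\<dots> \<le> (\<Sum>r0\<in>CR_words m l. \<Prod>k\<in>{1..<N}. ?q * ?c)"
    by (intro sum_mono prod_mono conjI zero_le each)
  also have "\<dots> = ?c * (?q * ?c) ^ (N - 1)"
    by simp
  also have "\<dots> = ?q ^ (N - 1) * ?c ^ N"
    using assms(4) by (cases N) (simp_all add: power_mult_distrib ac_simps)
  finally show ?thesis .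
qed

lemma card_common_subword_tuples_le:
  assumes "m \<ge> 2" and "1 \<le> L" and "2 * L \<le> l" and "N \<ge> 1" and pat: "pat \<in> location_patterns N n l"
  shows "card {rs \<in> relator_tuples m l n. \<forall>k<N.
      subword_at L (snd (pat k)) (rs ! fst (pat k)) = subword_at L (snd (pat 0)) (rs ! fst (pat 0))}
      * (2 * m - 1) ^ ((L - 1) * (N - 1))
    \<le> (2 * m - 1) ^ (N - 1) * card (CR_words m l) ^ n"
proof -
  let ?q = "2 * m - 1" and ?c = "card (CR_words m l)" and ?Q = "(2 * m - 1) ^ ((L - 1) * (N - 1))"
  let ?sum = "\<Sum>r0\<in>CR_words m l. \<Prod>k\<in>{1..<N}.
    card {r \<in> CR_words m l. subword_at L (snd (pat k)) r = subword_at L (snd (pat 0)) r0}"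
  have inj: "inj_on (fst \<circ> pat) {..<N}" and sub: "(fst \<circ> pat) ` {..<N} \<subseteq> {..<n}"
    using pat by (auto simp: location_patterns_def PiE_def Pi_def)
  have "card {rs \<in> relator_tuples m l n. \<forall>k<N.
      subword_at L (snd (pat k)) (rs ! fst (pat k)) = subword_at L (snd (pat 0)) (rs ! fst (pat 0))}
    \<le> ?sum * ?c ^ (n - N)"
    using card_lists_common_feature_le[OF finite_CR_words inj sub assms(4),
        where F = "\<lambda>k. subword_at L (snd (pat k))"]
    by (simp add: relator_tuples_nth conj_assoc)
  then have "card {rs \<in> relator_tuples m l n. \<forall>k<N.
      subword_at L (snd (pat k)) (rs ! fst (pat k)) = subword_at L (snd (pat 0)) (rs ! fst (pat 0))} * ?Q
    \<le> ?sum * ?c ^ (n - N) * ?Q"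
    by (rule mult_le_mono1)
  also have "\<dots> = ?sum * ?Q * ?c ^ (n - N)"
    by (simp only: ac_simps)
  also have "\<dots> \<le> ?q ^ (N - 1) * ?c ^ N * ?c ^ (n - N)"
    by (rule mult_le_mono1[OF sum_prod_card_subword_at_le[OF assms(1-4)]])
  also have "\<dots> = ?q ^ (N - 1) * ?c ^ n"
    using location_patterns_le[OF pat] by (simp add: mult.assoc power_add[symmetric])
  finally show ?thesis .
qed

lemma card_repeated_word_le:
  assumes "N \<ge> 1"
  shows "card {rs \<in> relator_tuples m l n. repeated_word L N rs}
    \<le> card {rs \<in> relator_tuples m l n. \<exists>i<n. self_overlap L (rs ! i)}
      + (\<Sum>pat\<in>location_patterns N n l. card {rs \<in> relator_tuples m l n. \<forall>k<N.
          subword_at L (snd (pat k)) (rs ! fst (pat k)) = subword_at L (snd (pat 0)) (rs ! fst (pat 0))})"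
proof -
  let ?A = "{rs \<in> relator_tuples m l n. \<exists>i<n. self_overlap L (rs ! i)}"
  let ?B = "\<lambda>pat. {rs \<in> relator_tuples m l n. \<forall>k<N.
    subword_at L (snd (pat k)) (rs ! fst (pat k)) = subword_at L (snd (pat 0)) (rs ! fst (pat 0))}"
  have "{rs \<in> relator_tuples m l n. repeated_word L N rs} \<subseteq> ?A \<union> (\<Union>pat\<in>location_patterns N n l. ?B pat)"
  proof
    fix rs assume "rs \<in> {rs \<in> relator_tuples m l n. repeated_word L N rs}"
    then have rs: "rs \<in> relator_tuples m l n" and "repeated_word L N rs" by auto
    from repeated_word_cases[OF this assms]
    show "rs \<in> ?A \<union> (\<Union>pat\<in>location_patterns N n l. ?B pat)"
    proof (elim disjE bexE)
      assume "\<exists>i<n. self_overlap L (rs ! i)"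
      with rs show ?thesis by simp
    next
      fix pat assume pat: "pat \<in> location_patterns N n l" and common: "\<forall>k<N.
        subword_at L (snd (pat k)) (rs ! fst (pat k)) = subword_at L (snd (pat 0)) (rs ! fst (pat 0))"
      have "rs \<in> ?B pat" by (rule CollectI, rule conjI[OF rs common])
      with pat show ?thesis by blast
    qed
  qed
  moreover have "finite (?A \<union> (\<Union>pat\<in>location_patterns N n l. ?B pat))"
    by (rule finite_subset[OF _ finite_relator_tuples]) blast
  ultimately have "card {rs \<in> relator_tuples m l n. repeated_word L N rs}
      \<le> card (?A \<union> (\<Union>pat\<in>location_patterns N n l. ?B pat))"
    by (rule card_mono[rotated])
  also have "\<dots> \<le> card ?A + card (\<Union>pat\<in>location_patterns N n l. ?B pat)"
    by (rule card_Un_le)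
  also have "card (\<Union>pat\<in>location_patterns N n l. ?B pat) \<le> (\<Sum>pat\<in>location_patterns N n l. card (?B pat))"
    by (rule card_UN_le[OF finite_location_patterns])
  finally show ?thesis by simp
qed

lemma prob_repeated_word_le:
  assumes "m \<ge> 2" and "1 \<le> L" and "2 * L \<le> l" and "N \<ge> 1"
  defines "q \<equiv> real (2 * m - 1)"
  shows "prob_event m l n (repeated_word L N)
    \<le> real n * (4 * real l ^ 2) * q / q ^ L + (2 * real n * real l) ^ N * q ^ (N - 1) / q ^ ((L - 1) * (N - 1))"
proof -
  let ?T = "relator_tuples m l n" and ?c = "card (CR_words m l)" and ?pats = "location_patterns N n l"
  let ?A = "{rs \<in> ?T. \<exists>i<n. self_overlap L (rs ! i)}"
  let ?B = "\<lambda>pat. {rs \<in> ?T. \<forall>k<N.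
    subword_at L (snd (pat k)) (rs ! fst (pat k)) = subword_at L (snd (pat 0)) (rs ! fst (pat 0))}"
  have c: "0 < ?c" using card_CR_words_pos assms(1-3) by simp
  have A: "real (card ?A) / real (?c ^ n) \<le> real (n * (4 * l ^ 2) * (2 * m - 1)) / real ((2 * m - 1) ^ L)"
    by (rule of_nat_div_le_of_nat_div[OF card_self_overlap_tuples_le[OF assms(1-3)]]) (use assms(1) c in simp_all)
  have B: "real (card (?B pat)) / real (?c ^ n)
      \<le> real ((2 * m - 1) ^ (N - 1)) / real ((2 * m - 1) ^ ((L - 1) * (N - 1)))" if "pat \<in> ?pats" for pat
    by (rule of_nat_div_le_of_nat_div[OF card_common_subword_tuples_le[OF assms(1-4) that]]) (use assms(1) c in simp_all)
  have "real (card {rs \<in> ?T. repeated_word L N rs}) \<le> real (card ?A) + (\<Sum>pat\<in>?pats. real (card (?B pat)))"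
    using card_repeated_word_le[OF assms(4)] by (simp only: of_nat_le_iff of_nat_add[symmetric] of_nat_sum[symmetric])
  then have "prob_event m l n (repeated_word L N)
      \<le> real (card ?A) / real (?c ^ n) + (\<Sum>pat\<in>?pats. real (card (?B pat)) / real (?c ^ n))"
    unfolding prob_event_def card_relator_tuples sum_divide_distrib[symmetric] add_divide_distrib[symmetric]
    by (rule divide_right_mono) simp
  also have "\<dots> \<le> real n * (4 * real l ^ 2) * q / q ^ L + (\<Sum>pat\<in>?pats. q ^ (N - 1) / q ^ ((L - 1) * (N - 1)))"
  proof (rule add_mono)
    show "real (card ?A) / real (?c ^ n) \<le> real n * (4 * real l ^ 2) * q / q ^ L"
      using A by (simp add: q_def)
    show "(\<Sum>pat\<in>?pats. real (card (?B pat)) / real (?c ^ n)) \<le> (\<Sum>pat\<in>?pats. q ^ (N - 1) / q ^ ((L - 1) * (N - 1)))"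
      by (rule sum_mono) (use B in \<open>simp add: q_def\<close>)
  qed
  also have "(\<Sum>pat\<in>?pats. q ^ (N - 1) / q ^ ((L - 1) * (N - 1))) = real (card ?pats) * (q ^ (N - 1) / q ^ ((L - 1) * (N - 1)))"
    by simp
  also have "\<dots> \<le> (2 * real n * real l) ^ N * (q ^ (N - 1) / q ^ ((L - 1) * (N - 1)))"
  proof (rule mult_right_mono)
    have "real (card ?pats) \<le> real ((2 * n * l) ^ N)"
      using card_location_patterns_le by (simp only: of_nat_le_iff)
    then show "real (card ?pats) \<le> (2 * real n * real l) ^ N" by simp
  qed (simp add: q_def)
  finally show ?thesis by (simp only: times_divide_eq_right)
qed

section \<open>The density estimate\<close>

lemma self_overlap_term_density_le:
  fixes q d lam :: real
  assumes "q > 1" and "real n \<le> q powr (d * real l)" and "lam * real l - 1 \<le> real L"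
  shows "real n * (4 * real l ^ 2) * q / q ^ L \<le> 4 * q ^ 2 * (real l ^ 2 * q powr (- (lam - d) * real l))"
proof -
  have "q powr (lam * real l - 1) \<le> q ^ L"
    using assms(1,3) by (simp add: powr_realpow[symmetric] powr_mono)
  then have "real n * (4 * real l ^ 2) * q / q ^ L
      \<le> q powr (d * real l) * (4 * real l ^ 2) * q / q powr (lam * real l - 1)"
    using assms(1,2) by (intro frac_le mult_right_mono) auto
  also have "\<dots> = 4 * real l ^ 2 * q powr (d * real l + 1 - (lam * real l - 1))"
    using assms(1) by (simp add: powr_add powr_diff power2_eq_square)
  also have "d * real l + 1 - (lam * real l - 1) = 2 + - (lam - d) * real l"
    by (simp add: algebra_simps)
  finally show ?thesis
    using assms(1) by (simp add: powr_add powr_numeral power2_eq_square ac_simps)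
qed

lemma common_subword_term_density_le:
  fixes q d lam :: real
  assumes "q > 1" and "real n \<le> q powr (d * real l)" and "lam * real l - 1 \<le> real L"
    and "1 \<le> L" and "N \<ge> 1"
  shows "(2 * real n * real l) ^ N * q ^ (N - 1) / q ^ ((L - 1) * (N - 1))
    \<le> 2 ^ N * q ^ (3 * (N - 1)) * (real l ^ N * q powr (- (real N * (lam - d) - lam) * real l))"
proof -
  have "q powr ((lam * real l - 2) * (real N - 1)) \<le> q ^ ((L - 1) * (N - 1))"
    using assms by (simp add: powr_realpow[symmetric] of_nat_diff powr_mono mult_right_mono)
  moreover have "(2 * real n * real l) ^ N \<le> (2 * q powr (d * real l) * real l) ^ N"
    using assms(2) by (intro power_mono mult_right_mono) auto
  ultimately have "(2 * real n * real l) ^ N * q ^ (N - 1) / q ^ ((L - 1) * (N - 1))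
      \<le> (2 * q powr (d * real l) * real l) ^ N * q ^ (N - 1) / q powr ((lam * real l - 2) * (real N - 1))"
    using assms(1) by (intro frac_le mult_right_mono) auto
  also have "\<dots> = 2 ^ N * q ^ (N - 1) * real l ^ N
      * q powr (real N * (d * real l) - (lam * real l - 2) * (real N - 1))"
    using assms(1) by (simp add: power_mult_distrib powr_diff powr_realpow[symmetric] powr_powr ac_simps)
  also have "real N * (d * real l) - (lam * real l - 2) * (real N - 1)
      = real (2 * (N - 1)) + - (real N * (lam - d) - lam) * real l"
    using assms(5) by (simp add: algebra_simps of_nat_diff)
  also have "2 ^ N * q ^ (N - 1) * real l ^ N * q powr (real (2 * (N - 1)) + - (real N * (lam - d) - lam) * real l)
      = 2 ^ N * q ^ (3 * (N - 1)) * (real l ^ N * q powr (- (real N * (lam - d) - lam) * real l))"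
  proof -
    have "q ^ (N - 1) * q ^ (2 * (N - 1)) = q ^ (3 * (N - 1))"
      by (simp flip: power_add)
    then show ?thesis
      unfolding powr_add powr_realpow[OF order.strict_trans[OF zero_less_one assms(1)]] by (simp add: ac_simps)
  qed
  finally show ?thesis .
qed

lemma prob_repeated_word_density_le:
  fixes d lam :: real
  assumes "m \<ge> 2" and "0 < d" and "d < lam" and "lam < 1/2" and "N \<ge> 1" and "real l \<ge> 2 / lam"
  defines "q \<equiv> real (2 * m - 1)"
  shows "prob_event m l (num_relators m d l) (repeated_word (nat \<lfloor>lam * real l\<rfloor>) N)
    \<le> 4 * q ^ 2 * (real l ^ 2 * q powr (- (lam - d) * real l))
      + 2 ^ N * q ^ (3 * (N - 1)) * (real l ^ N * q powr (- (real N * (lam - d) - lam) * real l))"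
proof -
  define L where "L = nat \<lfloor>lam * real l\<rfloor>"
  have q: "q > 1" using assms(1) by (simp add: q_def)
  have "lam * real l \<ge> 2" using assms(2,3,6) by (simp add: divide_le_eq mult.commute)
  then have L: "real L \<le> lam * real l" "lam * real l - 1 \<le> real L"
    unfolding L_def by linarith+
  have L1: "1 \<le> L" using L \<open>lam * real l \<ge> 2\<close> by linarith
  have "lam * real l \<le> 1 / 2 * real l" using assms(4) by (intro mult_right_mono) auto
  then have L2: "2 * L \<le> l" using L by linarith
  have n: "real (num_relators m d l) \<le> q powr (d * real l)"
    using assms(1) by (simp add: num_relators_def q_def of_nat_diff mult.commute)
  show ?thesis
    using prob_repeated_word_le[OF assms(1) L1 L2 assms(5), of "num_relators m d l"]
      self_overlap_term_density_le[OF q n L(2)] common_subword_term_density_le[OF q n L(2) L1 assms(5)]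
    unfolding L_def q_def by linarith
qed

theorem lemma8p11:
  fixes m N :: nat and d lam :: real
  assumes "m \<ge> 2" and "0 < d" and "d < lam" and "lam < 1/2"
    and "real N > lam / (lam - d)"
  shows "(\<lambda>l. prob_event m l (num_relators m d l)
            (repeated_word (nat \<lfloor>lam * real l\<rfloor>) N)) \<longlonglongrightarrow> 0"
proof -
  define q b where "q = real (2 * m - 1)" and "b = real N * (lam - d) - lam"
  have q: "q > 1" and a: "lam - d > 0" and b: "b > 0"
    using assms by (auto simp: q_def b_def pos_divide_less_eq)
  have N: "N \<ge> 1" using b assms(2,3) by (cases N) (auto simp: b_def)
  let ?P = "\<lambda>l. prob_event m l (num_relators m d l) (repeated_word (nat \<lfloor>lam * real l\<rfloor>) N)"
  let ?u = "\<lambda>l. 4 * q ^ 2 * (real l ^ 2 * q powr (- (lam - d) * real l))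
    + 2 ^ N * q ^ (3 * (N - 1)) * (real l ^ N * q powr (- b * real l))"
  have lower: "\<forall>\<^sub>F l in sequentially. 0 \<le> ?P l"
    by (simp add: prob_event_def)
  have upper: "\<forall>\<^sub>F l in sequentially. ?P l \<le> ?u l"
    using eventually_ge_at_top[of "nat \<lceil>2 / lam\<rceil>"]
    by eventually_elim (rule prob_repeated_word_density_le[OF assms(1-4) N, folded q_def b_def], linarith)
  have "?u \<longlonglongrightarrow> 0"
    by (intro tendsto_add_zero tendsto_mult_right_zero power_times_powr_decay[OF a q] power_times_powr_decay[OF b q])
  then show ?thesis
    by (rule tendsto_sandwich[OF lower upper tendsto_const])
qed

end
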